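(* Let $\{\tilde{\mathcal{T}}_n\}_{n\ge K}$ be a $K$-type Community Weighted Recursive Tree with type probabilities $p_1,\dots,p_K$ and positive weights $(\omega_{ij})$, and for $k\ge 0$ let $N_k(n)$ be the number of vertices of out-degree $k$ in $\tilde{\mathcal{T}}_n$. Then for each fixed $k$, $N_k(n)/n\to\tilde c_k$ in probability as $n\to\infty$, where $$\tilde c_k=\sum_{i=1}^K\frac{p_i}{1+\tilde r_i}\left(\frac{\tilde r_i}{1+\tilde r_i}\right)^k,\qquad \tilde r_i=\sum_{j=1}^K\frac{p_j\omega_{ji}}{\sum_{l=1}^K p_l\omega_{jl}}.$$
   Context: $K$-type Community Weighted Recursive Tree (CWRT): fix $K\ge 2$, a probability vector $(p_1,\dots,p_K)$ with $p_1=\max_i p_i>0$, and positive weights $\omega_{ij}$, $1\le i,j\le K$. The initial tree $\tilde{\mathcal{T}}_K$ is a uniform random recursive tree on vertices $\{1,\dots,K\}$ whose vertices are assigned types $1,\dots,K$ via a uniform random permutation (one vertex of each type). For $n>K$, vertex $n$ is added to $\tilde{\mathcal{T}}_{n-1}$: it is assigned type $i$ with probability $p_i$, and then, given type $i$, it attaches by an edge to each particular existing vertex of type $j$ with probability $\omega_{ij}/\sum_{l=1}^K n_l\omega_{il}$, where $n_l$ is the current number of type $l$ vertices. All random choices are independent. Edges are directed from parent (earlier vertex) to child; out-degree is the number of children. *)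

theory Defs
  imports "HOL-Probability.Probability"
begin

text \<open>Vertices are 1,2,...,n; types are 1,...,K. A tree state is a pair (ty, par):
  ty v is the type of vertex v, par v the parent of vertex v (par 1 = 0, the root
  has no parent). Only values on {1..n} are meaningful.\<close>

type_synonym cwrt_state = "(nat \<Rightarrow> nat) \<times> (nat \<Rightarrow> nat)"

fun urrt :: "nat \<Rightarrow> (nat \<Rightarrow> nat) pmf" where
  "urrt 0 = return_pmf (\<lambda>_. 0)"
| "urrt (Suc m) =
     (if m = 0 then return_pmf (\<lambda>_. 0)
      else do { par \<leftarrow> urrt m; v \<leftarrow> pmf_of_set {1..m}; return_pmf (par(Suc m := v)) })"

definition cwrt_init :: "nat \<Rightarrow> cwrt_state pmf" where
  "cwrt_init K = do { par \<leftarrow> urrt K; \<pi> \<leftarrow> pmf_of_set {\<pi>. \<pi> permutes {1..K}};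
                      return_pmf (\<pi>, par) }"

definition type_pmf :: "nat \<Rightarrow> (nat \<Rightarrow> real) \<Rightarrow> nat pmf" where
  "type_pmf K p = embed_pmf (\<lambda>i. if i \<in> {1..K} then p i else 0)"

definition attach_pmf ::
  "(nat \<Rightarrow> nat \<Rightarrow> real) \<Rightarrow> (nat \<Rightarrow> nat) \<Rightarrow> nat \<Rightarrow> nat \<Rightarrow> nat pmf" where
  "attach_pmf w ty n i = embed_pmf (\<lambda>v. if v \<in> {1..<n}
        then w i (ty v) / (\<Sum>u\<in>{1..<n}. w i (ty u)) else 0)"

definition cwrt_step ::
  "nat \<Rightarrow> (nat \<Rightarrow> real) \<Rightarrow> (nat \<Rightarrow> nat \<Rightarrow> real) \<Rightarrow> nat \<Rightarrow> cwrt_state \<Rightarrow> cwrt_state pmf" where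
  "cwrt_step K p w n s = do { i \<leftarrow> type_pmf K p; v \<leftarrow> attach_pmf w (fst s) n i;
                             return_pmf ((fst s)(n := i), (snd s)(n := v)) }"

fun cwrt :: "nat \<Rightarrow> (nat \<Rightarrow> real) \<Rightarrow> (nat \<Rightarrow> nat \<Rightarrow> real) \<Rightarrow> nat \<Rightarrow> cwrt_state pmf" where
  "cwrt K p w 0 = cwrt_init K"
| "cwrt K p w (Suc n) =
     (if Suc n \<le> K then cwrt_init K else cwrt K p w n \<bind> cwrt_step K p w (Suc n))"

definition out_degree :: "nat \<Rightarrow> cwrt_state \<Rightarrow> nat \<Rightarrow> nat" where
  "out_degree n s v = card {u \<in> {1..n}. snd s u = v}"

definition num_deg :: "nat \<Rightarrow> nat \<Rightarrow> cwrt_state \<Rightarrow> nat" where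
  "num_deg k n s = card {v \<in> {1..n}. out_degree n s v = k}"

definition r_tilde :: "nat \<Rightarrow> (nat \<Rightarrow> real) \<Rightarrow> (nat \<Rightarrow> nat \<Rightarrow> real) \<Rightarrow> nat \<Rightarrow> real" where
  "r_tilde K p w i = (\<Sum>j\<in>{1..K}. p j * w j i / (\<Sum>l\<in>{1..K}. p l * w j l))"

definition c_tilde :: "nat \<Rightarrow> (nat \<Rightarrow> real) \<Rightarrow> (nat \<Rightarrow> nat \<Rightarrow> real) \<Rightarrow> nat \<Rightarrow> real" where
  "c_tilde K p w k = (\<Sum>i\<in>{1..K}. p i / (1 + r_tilde K p w i)
                        * (r_tilde K p w i / (1 + r_tilde K p w i)) ^ k)"

end

theory Submission
  imports Defs
begin

text \<open>Write N(k,j,n) for the number of type-j vertices of out-degree k. Given the tree on n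
  vertices, each type-j vertex receives the next vertex with probability sum_i p_i w_ij / S_i,
  where S_i is the total i-weight of the tree. The type counts concentrate around p_l n, so this
  rate is r_j / n up to an error controlled by their deviations, and
  E[N(k,j,n+1) - N(k,j,n)] = [k = 0] p_j + (r_j / n) (N(k-1,j,n) - N(k,j,n)) + error.
  The fixed point of this mean-field recursion is N(k,j,n) = c(k,j) n with
  c(k,j) (1 + r_j) = [k = 0] p_j + r_j c(k-1,j), and c_tilde k = sum_j c(k,j).
  The deviation D = N(k,j,n) - c(k,j) n has bounded increments, so u(n) = E[D^2] satisfies
  u(n+1) <= (1 + 1/n) u(n) + e(n), where e(n)/n -> 0 once the corresponding second moments for
  k - 1 and for the type counts are o(n^2). Such a recurrence forces u(n) = o(n^2); by induction
  on k this holds for all k and j, and Chebyshev's inequality concludes.\<close>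

section \<open>Finitely supported distributions\<close>

lemma pmf_embed_pmf_finite:
  fixes f :: "'a \<Rightarrow> real"
  assumes "finite A" and "\<And>x. 0 \<le> f x" and "\<And>x. x \<notin> A \<Longrightarrow> f x = 0"
    and "(\<Sum>x\<in>A. f x) = 1"
  shows "pmf (embed_pmf f) x = f x"
proof (rule pmf_embed_pmf)
  have "(\<integral>\<^sup>+x. ennreal (f x) \<partial>count_space UNIV) = (\<Sum>x\<in>A. ennreal (f x))"
    using assms(1,3) by (intro nn_integral_count_space') auto
  also have "\<dots> = 1"
    using assms(2,4) by (subst sum_ennreal) auto
  finally show "(\<integral>\<^sup>+x. ennreal (f x) \<partial>count_space UNIV) = 1" .
qed (use assms(2) in auto)

lemma expectation_bind_pmf_finite:
  fixes f :: "'b \<Rightarrow> real"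
  assumes "finite (set_pmf M)" and "\<And>x. x \<in> set_pmf M \<Longrightarrow> finite (set_pmf (N x))"
  shows "measure_pmf.expectation (M \<bind> N) f
       = measure_pmf.expectation M (\<lambda>x. measure_pmf.expectation (N x) f)"
proof -
  have "measure_pmf.expectation (M \<bind> N) f
      = (\<Sum>x\<in>set_pmf M. pmf M x * measure_pmf.expectation (N x) f)"
    using assms by (subst pmf_expectation_bind[of "set_pmf M"]) auto
  also have "\<dots> = measure_pmf.expectation M (\<lambda>x. measure_pmf.expectation (N x) f)"
    using assms(1) by (subst integral_measure_pmf[of "set_pmf M"]) auto
  finally show ?thesis .
qed

lemma expectation_square_le:
  fixes X :: "'a \<Rightarrow> real"
  assumes fin: "finite (set_pmf M)" and close: "\<And>x. x \<in> set_pmf M \<Longrightarrow> \<bar>X x - a\<bar> \<le> d"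
  shows "measure_pmf.expectation M (\<lambda>x. (X x)\<^sup>2)
       \<le> a\<^sup>2 + 2 * a * (measure_pmf.expectation M X - a) + d\<^sup>2"
proof -
  have int: "integrable M g" for g :: "'a \<Rightarrow> real"
    using fin by (rule integrable_measure_pmf_finite)
  have "measure_pmf.expectation M (\<lambda>x. (X x)\<^sup>2)
      = measure_pmf.expectation M (\<lambda>x. a\<^sup>2 + 2 * a * (X x - a) + (X x - a)\<^sup>2)"
    by (simp add: power2_eq_square algebra_simps)
  also have "\<dots> = a\<^sup>2 + 2 * a * (measure_pmf.expectation M X - a)
      + measure_pmf.expectation M (\<lambda>x. (X x - a)\<^sup>2)"
    using int by simp
  also have "measure_pmf.expectation M (\<lambda>x. (X x - a)\<^sup>2) \<le> measure_pmf.expectation M (\<lambda>x. d\<^sup>2)"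
  proof (intro integral_mono_AE int AE_pmfI)
    fix x assume "x \<in> set_pmf M"
    with close have "\<bar>X x - a\<bar> \<le> \<bar>d\<bar>" by force
    then show "(X x - a)\<^sup>2 \<le> d\<^sup>2" by (simp add: abs_le_square_iff)
  qed
  finally show ?thesis by simp
qed

lemma real_card_filter: "finite S \<Longrightarrow> real (card {x\<in>S. P x}) = (\<Sum>x\<in>S. of_bool (P x))"
  by (simp add: Collect_conj_eq Int_commute)

lemma abs_inverse_diff_le:
  fixes x y m :: real
  assumes "0 < m" "m \<le> x" "m \<le> y"
  shows "\<bar>1 / x - 1 / y\<bar> \<le> \<bar>x - y\<bar> / m\<^sup>2"
proof -
  have "\<bar>1 / x - 1 / y\<bar> = \<bar>x - y\<bar> / (x * y)"
    using assms by (simp add: field_simps abs_minus_commute)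
  also have "\<dots> \<le> \<bar>x - y\<bar> / m\<^sup>2"
    using assms by (intro divide_left_mono) (auto simp: power2_eq_square intro: mult_mono)
  finally show ?thesis .
qed

lemma two_mult_le_weighted_squares:
  fixes x y c :: real
  assumes "0 < c"
  shows "2 * x * y \<le> x\<^sup>2 / c + c * y\<^sup>2"
proof -
  have "0 \<le> (x - c * y)\<^sup>2 / c" using assms by simp
  also have "\<dots> = x\<^sup>2 / c - 2 * x * y + c * y\<^sup>2"
    using assms by (simp add: power2_eq_square field_simps)
  finally show ?thesis by simp
qed

section \<open>Subquadratic growth from a recurrence\<close>

lemma sublinear_of_increments_tendsto_zero:
  fixes z b :: "nat \<Rightarrow> real"
  assumes incr: "\<forall>\<^sub>F n in sequentially. z (Suc n) \<le> z n + b n"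
    and b: "b \<longlonglongrightarrow> 0" and nonneg: "\<And>n. 0 \<le> z n"
  shows "(\<lambda>n. z n / real n) \<longlonglongrightarrow> 0"
proof (rule order_tendstoI)
  fix e :: real assume "e < 0"
  moreover have "0 \<le> z n / real n" for n
    using nonneg by simp
  ultimately show "\<forall>\<^sub>F n in sequentially. e < z n / real n"
    by (intro always_eventually allI) (rule less_le_trans)
next
  fix e :: real assume e: "0 < e"
  have "\<forall>\<^sub>F n in sequentially. b n < e / 2"
    using b e by (intro order_tendstoD(2)) auto
  with incr have "\<forall>\<^sub>F n in sequentially. z (Suc n) \<le> z n + e / 2"
    by eventually_elim auto
  then obtain N where N: "\<And>n. n \<ge> N \<Longrightarrow> z (Suc n) \<le> z n + e / 2"
    by (auto simp: eventually_sequentially)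
  have linear: "z n \<le> z N + (real n - real N) * (e / 2)" if "n \<ge> N" for n
    using that
  proof (induction n rule: dec_induct)
    case (step m)
    have "(real (Suc m) - real N) * (e / 2) = (real m - real N) * (e / 2) + e / 2"
      by (simp add: field_simps)
    then show ?case using N[of m] step by linarith
  qed simp
  have "\<forall>\<^sub>F n in sequentially. z N / real n < e / 2"
    using e by (intro order_tendstoD(2)[OF lim_const_over_n]) simp
  then show "\<forall>\<^sub>F n in sequentially. z n / real n < e"
    using eventually_ge_at_top[of "Suc N"]
  proof eventually_elim
    case (elim n)
    have "(real n - real N) * (e / 2) \<le> real n * (e / 2)"
      using e by (intro mult_right_mono) auto
    then have "z n \<le> z N + real n * (e / 2)"
      using linear[of n] elim by linarith
    then have "z n / real n \<le> z N / real n + e / 2"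
      using elim by (simp add: field_simps)
    then show ?case using elim by linarith
  qed
qed

lemma subquadratic_of_recurrence:
  fixes u e :: "nat \<Rightarrow> real"
  assumes rec: "\<forall>\<^sub>F n in sequentially. u (Suc n) \<le> (1 + 1 / real n) * u n + e n"
    and nonneg: "\<And>n. 0 \<le> u n" and e: "(\<lambda>n. e n / real n) \<longlonglongrightarrow> 0"
  shows "(\<lambda>n. u n / (real n)\<^sup>2) \<longlonglongrightarrow> 0"
proof -
  \<comment> \<open>Since (1 + 1/n) / (n + 1) = 1/n, the sequence u n / n grows by at most e n / (n + 1) per step.\<close>
  have "(\<lambda>n. u n / real n / real n) \<longlonglongrightarrow> 0"
  proof (rule sublinear_of_increments_tendsto_zero)
    show "\<forall>\<^sub>F n in sequentially.
        u (Suc n) / real (Suc n) \<le> u n / real n + e n / real n * (real n / real (Suc n))"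
      using rec eventually_gt_at_top[of 0]
    proof eventually_elim
      case (elim n)
      then have "u (Suc n) / real (Suc n) \<le> ((1 + 1 / real n) * u n + e n) / real (Suc n)"
        by (intro divide_right_mono) auto
      also have "\<dots> = u n / real n + e n / real n * (real n / real (Suc n))"
        using elim by (simp add: field_simps)
      finally show ?case .
    qed
    show "(\<lambda>n. e n / real n * (real n / real (Suc n))) \<longlonglongrightarrow> 0"
      using tendsto_mult[OF e LIMSEQ_n_over_Suc_n] by simp
  qed (use nonneg in simp)
  then show ?thesis by (simp add: power2_eq_square divide_divide_eq_left)
qed

section \<open>The CWRT process\<close>

lemma urrt_parent_less: "par \<in> set_pmf (urrt m) \<Longrightarrow> u \<in> {1..m} \<Longrightarrow> par u < u"
proof (induction m arbitrary: par)
  case (Suc m)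
  show ?case
  proof (cases "m = 0")
    case False
    with Suc.prems obtain par0 v where "par0 \<in> set_pmf (urrt m)" "v \<in> {1..m}" "par = par0(Suc m := v)"
      by auto
    with Suc show ?thesis by auto
  qed (use Suc.prems in auto)
qed simp

lemma finite_set_pmf_urrt: "finite (set_pmf (urrt m))"
  by (induction m) auto

lemma set_pmf_cwrt_init: "set_pmf (cwrt_init K) = {\<pi>. \<pi> permutes {1..K}} \<times> set_pmf (urrt K)"
proof -
  have fin: "finite {\<pi>. \<pi> permutes {1..K}}"
    by (rule finite_permutations) simp
  have ne: "{\<pi>. \<pi> permutes {1..K}} \<noteq> {}"
    using permutes_id by blast
  show ?thesis
    unfolding cwrt_init_def set_bind_pmf set_pmf_of_set[OF ne fin] by auto
qed

locale cwrt_model =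
  fixes K :: nat and p :: "nat \<Rightarrow> real" and w :: "nat \<Rightarrow> nat \<Rightarrow> real"
  assumes K_pos: "0 < K"
    and p_nonneg: "\<And>i. i \<in> {1..K} \<Longrightarrow> 0 \<le> p i"
    and p_sum: "(\<Sum>i\<in>{1..K}. p i) = 1"
    and w_pos: "\<And>i j. i \<in> {1..K} \<Longrightarrow> j \<in> {1..K} \<Longrightarrow> 0 < w i j"
begin

definition valid_state :: "nat \<Rightarrow> cwrt_state \<Rightarrow> bool" where
  "valid_state n s \<longleftrightarrow> (\<forall>u\<in>{1..n}. fst s u \<in> {1..K} \<and> snd s u < u)"

definition weight_sum :: "nat \<Rightarrow> cwrt_state \<Rightarrow> nat \<Rightarrow> real" where
  "weight_sum n s i = (\<Sum>u\<in>{1..n}. w i (fst s u))"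

definition add_vertex :: "nat \<Rightarrow> cwrt_state \<Rightarrow> nat \<Rightarrow> nat \<Rightarrow> cwrt_state" where
  "add_vertex n s i v = ((fst s)(Suc n := i), (snd s)(Suc n := v))"

lemma fst_add_vertex: "fst (add_vertex n s i v) = (fst s)(Suc n := i)"
  by (simp add: add_vertex_def)

lemma p_le_1: "i \<in> {1..K} \<Longrightarrow> p i \<le> 1"
  using member_le_sum[of i "{1..K}" p] p_nonneg p_sum by auto

lemma pmf_type_pmf: "pmf (type_pmf K p) i = (if i \<in> {1..K} then p i else 0)"
  unfolding type_pmf_def using p_sum by (intro pmf_embed_pmf_finite[of "{1..K}"]) (auto simp: p_nonneg)

lemma set_type_pmf: "set_pmf (type_pmf K p) \<subseteq> {1..K}"
  by (auto simp: set_pmf_iff pmf_type_pmf split: if_splits)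

lemma w_pos_state:
  "valid_state n s \<Longrightarrow> i \<in> {1..K} \<Longrightarrow> u \<in> {1..n} \<Longrightarrow> 0 < w i (fst s u)"
  by (simp add: valid_state_def w_pos)

lemma weight_sum_pos:
  assumes "valid_state n s" "i \<in> {1..K}" "1 \<le> n"
  shows "0 < weight_sum n s i"
  unfolding weight_sum_def using assms by (intro sum_pos w_pos_state) auto

lemma pmf_attach_pmf:
  assumes "valid_state n s" "i \<in> {1..K}" "1 \<le> n"
  shows "pmf (attach_pmf w (fst s) (Suc n) i) v
       = (if v \<in> {1..n} then w i (fst s v) / weight_sum n s i else 0)"
  unfolding attach_pmf_def atLeastLessThanSuc_atLeastAtMost weight_sum_def[symmetric]
proof (rule pmf_embed_pmf_finite[of "{1..n}"])
  have pos: "0 < weight_sum n s i" "u \<in> {1..n} \<Longrightarrow> 0 < w i (fst s u)" for u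
    using assms weight_sum_pos w_pos_state by auto
  then show "0 \<le> (if u \<in> {1..n} then w i (fst s u) / weight_sum n s i else 0)" for u
    by (simp add: less_imp_le)
  have "(\<Sum>u\<in>{1..n}. if u \<in> {1..n} then w i (fst s u) / weight_sum n s i else 0)
      = (\<Sum>u\<in>{1..n}. w i (fst s u)) / weight_sum n s i"
    by (simp add: sum_divide_distrib)
  also have "\<dots> = 1"
    using pos(1) by (simp add: weight_sum_def)
  finally show "(\<Sum>u\<in>{1..n}. if u \<in> {1..n} then w i (fst s u) / weight_sum n s i else 0) = 1" .
  show "u \<notin> {1..n} \<Longrightarrow> (if u \<in> {1..n} then w i (fst s u) / weight_sum n s i else 0) = 0" for u
    by (rule if_not_P)
qed simp

lemma set_attach_pmf:
  assumes "valid_state n s" "i \<in> {1..K}" "1 \<le> n"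
  shows "set_pmf (attach_pmf w (fst s) (Suc n) i) \<subseteq> {1..n}"
  using pmf_attach_pmf[OF assms] by (auto simp: set_pmf_iff split: if_splits)

lemma set_pmf_cwrt_step:
  assumes "valid_state n s" "1 \<le> n" "s' \<in> set_pmf (cwrt_step K p w (Suc n) s)"
  obtains i v where "i \<in> {1..K}" "v \<in> {1..n}" "s' = add_vertex n s i v"
proof -
  from assms(3) obtain i v where "i \<in> set_pmf (type_pmf K p)"
    and "v \<in> set_pmf (attach_pmf w (fst s) (Suc n) i)" and "s' = add_vertex n s i v"
    by (auto simp: cwrt_step_def add_vertex_def)
  with set_type_pmf set_attach_pmf[OF assms(1) _ assms(2)] that show ?thesis
    by blast
qed

lemma finite_set_pmf_cwrt_step:
  assumes "valid_state n s" "1 \<le> n"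
  shows "finite (set_pmf (cwrt_step K p w (Suc n) s))"
proof (rule finite_subset)
  show "set_pmf (cwrt_step K p w (Suc n) s) \<subseteq> (\<lambda>(i, v). add_vertex n s i v) ` ({1..K} \<times> {1..n})"
  proof
    fix s' assume "s' \<in> set_pmf (cwrt_step K p w (Suc n) s)"
    then obtain i v where "i \<in> {1..K}" "v \<in> {1..n}" "s' = add_vertex n s i v"
      using set_pmf_cwrt_step[OF assms] by blast
    then show "s' \<in> (\<lambda>(i, v). add_vertex n s i v) ` ({1..K} \<times> {1..n})"
      by (intro image_eqI[where x = "(i, v)"]) auto
  qed
qed simp

lemma integrable_cwrt_step:
  fixes f :: "cwrt_state \<Rightarrow> real"
  shows "valid_state n s \<Longrightarrow> 1 \<le> n \<Longrightarrow> integrable (measure_pmf (cwrt_step K p w (Suc n) s)) f"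
  by (intro integrable_measure_pmf_finite finite_set_pmf_cwrt_step)

lemma valid_state_add_vertex:
  "valid_state n s \<Longrightarrow> i \<in> {1..K} \<Longrightarrow> v \<in> {1..n} \<Longrightarrow> valid_state (Suc n) (add_vertex n s i v)"
  by (auto simp: valid_state_def add_vertex_def)

lemma expectation_cwrt_step:
  fixes f :: "cwrt_state \<Rightarrow> real"
  assumes "valid_state n s" "1 \<le> n"
  shows "measure_pmf.expectation (cwrt_step K p w (Suc n) s) f
       = (\<Sum>i\<in>{1..K}. p i * (\<Sum>v\<in>{1..n}. w i (fst s v) / weight_sum n s i * f (add_vertex n s i v)))"
proof -
  have law: "cwrt_step K p w (Suc n) s
      = type_pmf K p \<bind> (\<lambda>i. map_pmf (add_vertex n s i) (attach_pmf w (fst s) (Suc n) i))"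
    by (simp add: cwrt_step_def add_vertex_def map_pmf_def)
  have attach: "measure_pmf.expectation (map_pmf (add_vertex n s i) (attach_pmf w (fst s) (Suc n) i)) f
      = (\<Sum>v\<in>{1..n}. w i (fst s v) / weight_sum n s i * f (add_vertex n s i v))"
    if "i \<in> {1..K}" for i
    using set_attach_pmf[OF assms(1) that assms(2)]
    by (subst integral_map_pmf, subst integral_measure_pmf[of "{1..n}"])
      (auto simp: pmf_attach_pmf[OF assms(1) that assms(2)] intro!: sum.cong)
  have "measure_pmf.expectation (cwrt_step K p w (Suc n) s) f
      = (\<Sum>i\<in>{1..K}. pmf (type_pmf K p) i
          * measure_pmf.expectation (map_pmf (add_vertex n s i) (attach_pmf w (fst s) (Suc n) i)) f)"
    unfolding law using set_type_pmf finite_subset[OF set_attach_pmf[OF assms(1) _ assms(2)]]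
    by (subst pmf_expectation_bind[of "{1..K}"]) auto
  also have "\<dots> = (\<Sum>i\<in>{1..K}. p i * (\<Sum>v\<in>{1..n}. w i (fst s v) / weight_sum n s i * f (add_vertex n s i v)))"
    by (intro sum.cong refl) (simp add: pmf_type_pmf attach del: integral_map_pmf)
  finally show ?thesis .
qed

lemma cwrt_K: "cwrt K p w K = cwrt_init K"
  using K_pos by (cases K) auto

lemma valid_state_cwrt: "K \<le> n \<Longrightarrow> s \<in> set_pmf (cwrt K p w n) \<Longrightarrow> valid_state n s"
proof (induction n arbitrary: s rule: dec_induct)
  case base
  then obtain \<pi> par where "\<pi> permutes {1..K}" "par \<in> set_pmf (urrt K)" "s = (\<pi>, par)"
    by (auto simp: cwrt_K set_pmf_cwrt_init)
  then show ?case
    by (simp add: valid_state_def permutes_in_image urrt_parent_less del: atLeastAtMost_iff)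
next
  case (step n)
  then obtain s0 where "s0 \<in> set_pmf (cwrt K p w n)" "s \<in> set_pmf (cwrt_step K p w (Suc n) s0)"
    by auto
  moreover have "1 \<le> n" using step K_pos by simp
  ultimately show ?case
    using step set_pmf_cwrt_step valid_state_add_vertex by metis
qed

lemma finite_set_pmf_cwrt: "K \<le> n \<Longrightarrow> finite (set_pmf (cwrt K p w n))"
proof (induction n rule: dec_induct)
  case base
  then show ?case by (simp add: cwrt_K set_pmf_cwrt_init finite_permutations finite_set_pmf_urrt)
next
  case (step n)
  with K_pos show ?case
    by (auto intro: finite_set_pmf_cwrt_step valid_state_cwrt)
qed

lemma integrable_cwrt:
  fixes f :: "cwrt_state \<Rightarrow> real"
  shows "K \<le> n \<Longrightarrow> integrable (measure_pmf (cwrt K p w n)) f"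
  by (intro integrable_measure_pmf_finite finite_set_pmf_cwrt)

section \<open>Expected one-step changes of the counts\<close>

text \<open>Each existing type-j vertex receives the new vertex with probability attach_rate j n s.\<close>

definition attach_rate :: "nat \<Rightarrow> nat \<Rightarrow> cwrt_state \<Rightarrow> real" where
  "attach_rate j n s = (\<Sum>i\<in>{1..K}. p i * w i j / weight_sum n s i)"

lemma expectation_cwrt_step_additive:
  assumes valid: "valid_state n s" and n: "1 \<le> n"
    and f: "\<And>i v. i \<in> {1..K} \<Longrightarrow> v \<in> {1..n} \<Longrightarrow> f (add_vertex n s i v) = a + g v + h i"
  shows "measure_pmf.expectation (cwrt_step K p w (Suc n) s) f
       = a + (\<Sum>v\<in>{1..n}. attach_rate (fst s v) n s * g v) + (\<Sum>i\<in>{1..K}. p i * h i)"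
proof -
  let ?q = "\<lambda>i v. w i (fst s v) / weight_sum n s i"
  have q_sum: "(\<Sum>v\<in>{1..n}. ?q i v) = 1" if "i \<in> {1..K}" for i
    using weight_sum_pos[OF valid that n] by (simp add: sum_divide_distrib[symmetric] weight_sum_def)
  have "measure_pmf.expectation (cwrt_step K p w (Suc n) s) f
      = (\<Sum>i\<in>{1..K}. p i * (\<Sum>v\<in>{1..n}. ?q i v * (a + g v + h i)))"
    using f by (simp add: expectation_cwrt_step[OF valid n])
  also have "\<dots> = (\<Sum>i\<in>{1..K}. p i * a + (\<Sum>v\<in>{1..n}. p i * ?q i v * g v) + p i * h i)"
  proof (intro sum.cong refl)
    fix i assume i: "i \<in> {1..K}"
    have "(\<Sum>v\<in>{1..n}. ?q i v * (a + g v + h i))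
        = a * (\<Sum>v\<in>{1..n}. ?q i v) + (\<Sum>v\<in>{1..n}. ?q i v * g v) + h i * (\<Sum>v\<in>{1..n}. ?q i v)"
      by (simp add: ring_distribs add_divide_distrib sum.distrib sum_distrib_left mult_ac)
    then show "p i * (\<Sum>v\<in>{1..n}. ?q i v * (a + g v + h i))
        = p i * a + (\<Sum>v\<in>{1..n}. p i * ?q i v * g v) + p i * h i"
      unfolding q_sum[OF i] by (simp add: ring_distribs sum_distrib_left mult_ac)
  qed
  also have "\<dots> = (\<Sum>i\<in>{1..K}. p i) * a + (\<Sum>v\<in>{1..n}. (\<Sum>i\<in>{1..K}. p i * ?q i v) * g v)
      + (\<Sum>i\<in>{1..K}. p i * h i)"
    using sum.swap[where g = "\<lambda>i v. p i * ?q i v * g v" and A = "{1..K}" and B = "{1..n}"]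
    by (simp add: sum.distrib sum_distrib_right)
  also have "\<dots> = a + (\<Sum>v\<in>{1..n}. attach_rate (fst s v) n s * g v) + (\<Sum>i\<in>{1..K}. p i * h i)"
    unfolding p_sum attach_rate_def by simp
  finally show ?thesis .
qed

definition type_count :: "nat \<Rightarrow> nat \<Rightarrow> cwrt_state \<Rightarrow> nat" where
  "type_count l n s = card {u\<in>{1..n}. fst s u = l}"

definition deg_count :: "nat \<Rightarrow> nat \<Rightarrow> nat \<Rightarrow> cwrt_state \<Rightarrow> nat" where
  "deg_count k j n s = card {u\<in>{1..n}. fst s u = j \<and> out_degree n s u = k}"

text \<open>The vertices reaching out-degree k when they receive a child; the Suc avoids the
  truncated k - 1, so that there are none for k = 0.\<close>

definition pre_deg_count :: "nat \<Rightarrow> nat \<Rightarrow> nat \<Rightarrow> cwrt_state \<Rightarrow> nat" where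
  "pre_deg_count k j n s = card {u\<in>{1..n}. fst s u = j \<and> Suc (out_degree n s u) = k}"

lemma deg_count_le: "deg_count k j n s \<le> n"
  unfolding deg_count_def by (rule order.trans[OF card_mono[of "{1..n}"]]) auto

lemma pre_deg_count_le: "pre_deg_count k j n s \<le> n"
  unfolding pre_deg_count_def by (rule order.trans[OF card_mono[of "{1..n}"]]) auto

lemma pre_deg_count_0: "pre_deg_count 0 j n s = 0"
  by (simp add: pre_deg_count_def)

lemma pre_deg_count_Suc: "pre_deg_count (Suc k) j n s = deg_count k j n s"
  by (simp add: pre_deg_count_def deg_count_def)

lemma out_degree_add_vertex:
  assumes "valid_state n s" "v \<in> {1..n}" "u \<in> {1..n}"
  shows "out_degree (Suc n) (add_vertex n s i v) u = out_degree n s u + of_bool (u = v)"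
proof -
  have "{x\<in>{1..Suc n}. snd (add_vertex n s i v) x = u}
      = {x\<in>{1..n}. snd s x = u} \<union> (if v = u then {Suc n} else {})"
    using assms by (auto simp: add_vertex_def)
  then show ?thesis by (auto simp: out_degree_def card_insert_if)
qed

lemma out_degree_new_vertex:
  assumes "valid_state n s" "v \<in> {1..n}"
  shows "out_degree (Suc n) (add_vertex n s i v) (Suc n) = 0"
proof -
  have "snd (add_vertex n s i v) x \<noteq> Suc n" if "x \<in> {1..Suc n}" for x
  proof (cases "x = Suc n")
    case False
    with that have "x \<in> {1..n}" by auto
    with assms(1) have "snd s x < x" by (simp add: valid_state_def)
    with \<open>x \<in> {1..n}\<close> show ?thesis by (simp add: add_vertex_def)
  qed (use assms(2) in \<open>simp add: add_vertex_def\<close>)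
  then show ?thesis by (auto simp: out_degree_def)
qed

lemma type_count_add_vertex:
  "type_count l (Suc n) (add_vertex n s i v) = type_count l n s + of_bool (i = l)"
proof -
  have "{u\<in>{1..Suc n}. fst (add_vertex n s i v) u = l}
      = {u\<in>{1..n}. fst s u = l} \<union> (if i = l then {Suc n} else {})"
    by (auto simp: add_vertex_def)
  then show ?thesis by (simp add: type_count_def)
qed

lemma deg_count_add_vertex:
  assumes "valid_state n s" "v \<in> {1..n}"
  shows "real (deg_count k j (Suc n) (add_vertex n s i v)) = real (deg_count k j n s)
       - of_bool (fst s v = j \<and> out_degree n s v = k)
       + of_bool (fst s v = j \<and> Suc (out_degree n s v) = k)
       + of_bool (i = j \<and> k = 0)"
proof -
  let ?s' = "add_vertex n s i v"
  let ?old = "\<lambda>u. of_bool (fst s u = j \<and> out_degree n s u = k) :: real"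
  let ?new = "\<lambda>u. of_bool (fst ?s' u = j \<and> out_degree (Suc n) ?s' u = k) :: real"
  have same: "?new u = ?old u" if "u \<in> {1..n} - {v}" for u
    using that assms by (simp add: out_degree_add_vertex fst_add_vertex)
  have "real (deg_count k j (Suc n) ?s') = (\<Sum>u\<in>{1..n}. ?new u) + ?new (Suc n)"
    unfolding deg_count_def real_card_filter[OF finite_atLeastAtMost] by simp
  also have "?new (Suc n) = of_bool (i = j \<and> k = 0)"
    using assms by (simp add: out_degree_new_vertex fst_add_vertex)
  also have "(\<Sum>u\<in>{1..n}. ?new u) = ?new v + (\<Sum>u\<in>{1..n} - {v}. ?new u)"
    using assms(2) by (intro sum.remove) auto
  also have "(\<Sum>u\<in>{1..n} - {v}. ?new u) = (\<Sum>u\<in>{1..n} - {v}. ?old u)"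
    using same by (rule sum.cong[OF refl])
  also have "?new v = of_bool (fst s v = j \<and> Suc (out_degree n s v) = k)"
    using assms by (simp add: out_degree_add_vertex fst_add_vertex)
  also have "(\<Sum>u\<in>{1..n} - {v}. ?old u) = (\<Sum>u\<in>{1..n}. ?old u) - ?old v"
    using sum.remove[OF finite_atLeastAtMost assms(2), of ?old] by simp
  also have "(\<Sum>u\<in>{1..n}. ?old u) = real (deg_count k j n s)"
    unfolding deg_count_def real_card_filter[OF finite_atLeastAtMost] ..
  finally show ?thesis by simp
qed

lemma expectation_type_count_step:
  assumes "valid_state n s" "1 \<le> n" "l \<in> {1..K}"
  shows "measure_pmf.expectation (cwrt_step K p w (Suc n) s) (\<lambda>s'. real (type_count l (Suc n) s'))
       = real (type_count l n s) + p l"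
proof -
  have "measure_pmf.expectation (cwrt_step K p w (Suc n) s) (\<lambda>s'. real (type_count l (Suc n) s'))
      = real (type_count l n s) + (\<Sum>v\<in>{1..n}. attach_rate (fst s v) n s * 0)
        + (\<Sum>i\<in>{1..K}. p i * of_bool (i = l))"
    by (rule expectation_cwrt_step_additive[OF assms(1,2)]) (simp add: type_count_add_vertex)
  also have "(\<Sum>i\<in>{1..K}. p i * of_bool (i = l)) = p l"
    using assms(3) by (simp add: sum.delta)
  finally show ?thesis by simp
qed

lemma expectation_deg_count_step:
  assumes "valid_state n s" "1 \<le> n" "j \<in> {1..K}"
  shows "measure_pmf.expectation (cwrt_step K p w (Suc n) s) (\<lambda>s'. real (deg_count k j (Suc n) s'))
       = real (deg_count k j n s) + of_bool (k = 0) * p j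
         + attach_rate j n s * (real (pre_deg_count k j n s) - real (deg_count k j n s))"
proof -
  let ?gain = "\<lambda>v. of_bool (fst s v = j \<and> Suc (out_degree n s v) = k) :: real"
  let ?loss = "\<lambda>v. of_bool (fst s v = j \<and> out_degree n s v = k) :: real"
  have "measure_pmf.expectation (cwrt_step K p w (Suc n) s) (\<lambda>s'. real (deg_count k j (Suc n) s'))
      = real (deg_count k j n s) + (\<Sum>v\<in>{1..n}. attach_rate (fst s v) n s * (?gain v - ?loss v))
        + (\<Sum>i\<in>{1..K}. p i * of_bool (i = j \<and> k = 0))"
    by (rule expectation_cwrt_step_additive[OF assms(1,2)]) (simp add: deg_count_add_vertex[OF assms(1)])
  also have "(\<Sum>v\<in>{1..n}. attach_rate (fst s v) n s * (?gain v - ?loss v))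
      = attach_rate j n s * ((\<Sum>v\<in>{1..n}. ?gain v) - (\<Sum>v\<in>{1..n}. ?loss v))"
    by (subst sum_subtractf[symmetric], subst sum_distrib_left) (rule sum.cong; auto)
  also have "(\<Sum>v\<in>{1..n}. ?gain v) = real (pre_deg_count k j n s)"
    unfolding pre_deg_count_def real_card_filter[OF finite_atLeastAtMost] ..
  also have "(\<Sum>v\<in>{1..n}. ?loss v) = real (deg_count k j n s)"
    unfolding deg_count_def real_card_filter[OF finite_atLeastAtMost] ..
  also have "(\<Sum>i\<in>{1..K}. p i * of_bool (i = j \<and> k = 0)) = of_bool (k = 0) * p j"
    using assms(3) by (cases "k = 0") (simp_all add: sum.delta)
  finally show ?thesis by simp
qed

section \<open>The limit constants\<close>

abbreviation r :: "nat \<Rightarrow> real" where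
  "r j \<equiv> r_tilde K p w j"

definition limit_weight :: "nat \<Rightarrow> real" where
  "limit_weight i = (\<Sum>l\<in>{1..K}. p l * w i l)"

definition w_min :: real where
  "w_min = Min ((\<lambda>(i, j). w i j) ` ({1..K} \<times> {1..K}))"

definition w_max :: real where
  "w_max = Max ((\<lambda>(i, j). w i j) ` ({1..K} \<times> {1..K}))"

lemma w_min_le: "i \<in> {1..K} \<Longrightarrow> j \<in> {1..K} \<Longrightarrow> w_min \<le> w i j"
  unfolding w_min_def by (rule Min_le) force+

lemma w_le_max: "i \<in> {1..K} \<Longrightarrow> j \<in> {1..K} \<Longrightarrow> w i j \<le> w_max"
  unfolding w_max_def by (rule Max_ge) force+

lemma w_min_pos: "0 < w_min"
  using K_pos unfolding w_min_def by (subst Min_gr_iff) (auto intro: w_pos)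

lemma limit_weight_bounds:
  assumes "i \<in> {1..K}"
  shows "w_min \<le> limit_weight i" "limit_weight i \<le> w_max"
proof -
  have "(\<Sum>l\<in>{1..K}. p l * w_min) \<le> limit_weight i" "limit_weight i \<le> (\<Sum>l\<in>{1..K}. p l * w_max)"
    unfolding limit_weight_def using assms
    by (auto intro!: sum_mono mult_left_mono p_nonneg w_min_le w_le_max)
  then show "w_min \<le> limit_weight i" "limit_weight i \<le> w_max"
    using p_sum by (simp_all flip: sum_distrib_right)
qed

lemma r_tilde_eq: "r j = (\<Sum>i\<in>{1..K}. p i * w i j / limit_weight i)"
  by (simp add: r_tilde_def limit_weight_def)

lemma r_tilde_nonneg: "j \<in> {1..K} \<Longrightarrow> 0 \<le> r j"
  unfolding r_tilde_eq using limit_weight_bounds(1) w_min_pos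
  by (intro sum_nonneg divide_nonneg_pos mult_nonneg_nonneg p_nonneg less_imp_le w_pos)
    (auto intro: less_le_trans)

definition c_type :: "nat \<Rightarrow> nat \<Rightarrow> real" where
  "c_type k j = p j / (1 + r j) * (r j / (1 + r j)) ^ k"

definition c_type_pred :: "nat \<Rightarrow> nat \<Rightarrow> real" where
  "c_type_pred k j = (if k = 0 then 0 else c_type (k - 1) j)"

lemma c_tilde_eq_sum: "c_tilde K p w k = (\<Sum>j\<in>{1..K}. c_type k j)"
  by (simp add: c_tilde_def c_type_def)

lemma c_type_bounds:
  assumes "j \<in> {1..K}"
  shows "0 \<le> c_type k j" "c_type k j \<le> 1"
proof -
  have r: "0 \<le> r j" by (rule r_tilde_nonneg[OF assms])
  have q: "0 \<le> r j / (1 + r j)" "r j / (1 + r j) \<le> 1" using r by auto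
  have pj: "0 \<le> p j" "p j \<le> 1" using p_nonneg p_le_1 assms by auto
  have "p j / (1 + r j) \<le> 1" using pj r by (simp add: divide_le_eq)
  moreover have "(r j / (1 + r j)) ^ k \<le> 1" using q by (simp add: power_le_one)
  ultimately show "c_type k j \<le> 1"
    unfolding c_type_def using q by (intro mult_le_one) auto
  show "0 \<le> c_type k j"
    unfolding c_type_def using q pj r by simp
qed

text \<open>The fixed-point equation of the mean-field recursion for deg_count.\<close>

lemma c_type_balance:
  assumes "j \<in> {1..K}"
  shows "c_type k j * (1 + r j) = of_bool (k = 0) * p j + r j * c_type_pred k j"
proof (cases k)
  case (Suc m)
  have cancel: "r j / (1 + r j) * (1 + r j) = r j"
    using r_tilde_nonneg[OF assms] by simp
  have "c_type (Suc m) j * (1 + r j)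
      = p j / (1 + r j) * (r j / (1 + r j)) ^ m * (r j / (1 + r j) * (1 + r j))"
    unfolding c_type_def power_Suc by (simp only: mult_ac)
  also have "\<dots> = r j * c_type m j"
    unfolding cancel c_type_def by (simp only: mult_ac)
  finally show ?thesis using Suc by (simp add: c_type_pred_def)
qed (use r_tilde_nonneg[OF assms] in \<open>simp add: c_type_def c_type_pred_def\<close>)

section \<open>Second moments of the deviations\<close>

definition deg_dev :: "nat \<Rightarrow> nat \<Rightarrow> nat \<Rightarrow> cwrt_state \<Rightarrow> real" where
  "deg_dev k j n s = real (deg_count k j n s) - c_type k j * real n"

definition pre_deg_dev :: "nat \<Rightarrow> nat \<Rightarrow> nat \<Rightarrow> cwrt_state \<Rightarrow> real" where
  "pre_deg_dev k j n s = real (pre_deg_count k j n s) - c_type_pred k j * real n"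

definition type_dev :: "nat \<Rightarrow> nat \<Rightarrow> cwrt_state \<Rightarrow> real" where
  "type_dev l n s = real (type_count l n s) - p l * real n"

lemma pre_deg_dev_0: "pre_deg_dev 0 j n s = 0"
  by (simp add: pre_deg_dev_def pre_deg_count_0 c_type_pred_def)

lemma pre_deg_dev_Suc: "pre_deg_dev (Suc k) j n s = deg_dev k j n s"
  by (simp add: pre_deg_dev_def deg_dev_def pre_deg_count_Suc c_type_pred_def)

lemma weight_sum_eq:
  assumes "valid_state n s"
  shows "weight_sum n s i = (\<Sum>l\<in>{1..K}. w i l * real (type_count l n s))"
proof -
  have "weight_sum n s i = (\<Sum>l\<in>{1..K}. \<Sum>u\<in>{u\<in>{1..n}. fst s u = l}. w i (fst s u))"
    unfolding weight_sum_def using assms by (subst sum.group) (auto simp: valid_state_def)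
  also have "\<dots> = (\<Sum>l\<in>{1..K}. w i l * real (type_count l n s))"
    by (intro sum.cong refl) (simp add: type_count_def)
  finally show ?thesis .
qed

lemma weight_sum_ge:
  assumes "valid_state n s" "i \<in> {1..K}"
  shows "real n * w_min \<le> weight_sum n s i"
proof -
  have "(\<Sum>u\<in>{1..n}. w_min) \<le> weight_sum n s i"
    unfolding weight_sum_def using assms by (intro sum_mono w_min_le) (auto simp: valid_state_def)
  then show ?thesis by simp
qed

lemma weight_sum_dev:
  assumes "valid_state n s" "i \<in> {1..K}"
  shows "\<bar>weight_sum n s i - real n * limit_weight i\<bar> \<le> w_max * (\<Sum>l\<in>{1..K}. \<bar>type_dev l n s\<bar>)"
proof -
  have "weight_sum n s i - real n * limit_weight i = (\<Sum>l\<in>{1..K}. w i l * type_dev l n s)"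
    unfolding weight_sum_eq[OF assms(1)] limit_weight_def type_dev_def
    by (simp add: sum_distrib_left sum_subtractf[symmetric] algebra_simps)
  also have "\<bar>\<dots>\<bar> \<le> (\<Sum>l\<in>{1..K}. w_max * \<bar>type_dev l n s\<bar>)"
  proof (intro order.trans[OF sum_abs] sum_mono)
    fix l assume l: "l \<in> {1..K}"
    have "\<bar>w i l\<bar> \<le> w_max"
      using w_pos[OF assms(2) l] w_le_max[OF assms(2) l] by simp
    then show "\<bar>w i l * type_dev l n s\<bar> \<le> w_max * \<bar>type_dev l n s\<bar>"
      by (simp add: abs_mult mult_right_mono)
  qed
  finally show ?thesis by (simp add: sum_distrib_left)
qed

lemma inverse_weight_sum_dev:
  assumes "valid_state n s" "1 \<le> n" "i \<in> {1..K}"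
  shows "\<bar>1 / weight_sum n s i - 1 / (real n * limit_weight i)\<bar>
       \<le> w_max * (\<Sum>l\<in>{1..K}. \<bar>type_dev l n s\<bar>) / (real n * w_min)\<^sup>2"
proof -
  have n: "0 < real n" using assms(2) by simp
  have "\<bar>1 / weight_sum n s i - 1 / (real n * limit_weight i)\<bar>
      \<le> \<bar>weight_sum n s i - real n * limit_weight i\<bar> / (real n * w_min)\<^sup>2"
  proof (rule abs_inverse_diff_le)
    show "0 < real n * w_min" using n w_min_pos by simp
    show "real n * w_min \<le> weight_sum n s i" by (rule weight_sum_ge[OF assms(1,3)])
    show "real n * w_min \<le> real n * limit_weight i"
      using n limit_weight_bounds(1)[OF assms(3)] by simp
  qed
  also have "\<dots> \<le> w_max * (\<Sum>l\<in>{1..K}. \<bar>type_dev l n s\<bar>) / (real n * w_min)\<^sup>2"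
    by (intro divide_right_mono weight_sum_dev[OF assms(1,3)]) simp
  finally show ?thesis .
qed

lemma attach_rate_dev:
  assumes "valid_state n s" "1 \<le> n" "j \<in> {1..K}"
  shows "\<bar>attach_rate j n s - r j / real n\<bar>
       \<le> (w_max / w_min)\<^sup>2 * (\<Sum>l\<in>{1..K}. \<bar>type_dev l n s\<bar>) / (real n)\<^sup>2"
proof -
  define M where "M = (\<Sum>l\<in>{1..K}. \<bar>type_dev l n s\<bar>)"
  note inv = inverse_weight_sum_dev[OF assms(1,2), folded M_def]
  have diff: "attach_rate j n s - r j / real n
      = (\<Sum>i\<in>{1..K}. p i * w i j * (1 / weight_sum n s i - 1 / (real n * limit_weight i)))"
    unfolding attach_rate_def r_tilde_eq sum_divide_distrib sum_subtractf[symmetric]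
    by (intro sum.cong refl) (simp add: right_diff_distrib)
  have "\<bar>\<Sum>i\<in>{1..K}. p i * w i j * (1 / weight_sum n s i - 1 / (real n * limit_weight i))\<bar>
      \<le> (\<Sum>i\<in>{1..K}. p i * (w_max * (w_max * M / (real n * w_min)\<^sup>2)))"
  proof (rule order.trans[OF sum_abs], rule sum_mono)
    fix i assume i: "i \<in> {1..K}"
    have "\<bar>p i * w i j * (1 / weight_sum n s i - 1 / (real n * limit_weight i))\<bar>
        = p i * (w i j * \<bar>1 / weight_sum n s i - 1 / (real n * limit_weight i)\<bar>)"
      using p_nonneg[OF i] w_pos[OF i assms(3)] by (simp add: abs_mult)
    also have "\<dots> \<le> p i * (w_max * (w_max * M / (real n * w_min)\<^sup>2))"
      using p_nonneg[OF i] w_pos[OF i assms(3)] w_le_max[OF i assms(3)] inv[OF i]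
      by (intro mult_left_mono mult_mono) auto
    finally show "\<bar>p i * w i j * (1 / weight_sum n s i - 1 / (real n * limit_weight i))\<bar>
        \<le> p i * (w_max * (w_max * M / (real n * w_min)\<^sup>2))" .
  qed
  also have "\<dots> = w_max * (w_max * M / (real n * w_min)\<^sup>2)"
    unfolding sum_distrib_right[symmetric] p_sum by simp
  also have "\<dots> = (w_max / w_min)\<^sup>2 * M / (real n)\<^sup>2"
    by (simp add: power2_eq_square mult_ac)
  finally show ?thesis unfolding diff M_def .
qed

lemma type_dev_step:
  assumes "valid_state n s" "1 \<le> n" "l \<in> {1..K}"
  shows "measure_pmf.expectation (cwrt_step K p w (Suc n) s) (\<lambda>s'. (type_dev l (Suc n) s')\<^sup>2)
       \<le> (type_dev l n s)\<^sup>2 + 1"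
proof -
  let ?M = "cwrt_step K p w (Suc n) s"
  have mean: "measure_pmf.expectation ?M (type_dev l (Suc n)) = type_dev l n s"
    using expectation_type_count_step[OF assms] integrable_cwrt_step[OF assms(1,2)]
    by (simp add: type_dev_def[abs_def] Bochner_Integration.integral_diff algebra_simps)
  have close: "\<bar>type_dev l (Suc n) s' - type_dev l n s\<bar> \<le> 1" if s': "s' \<in> set_pmf ?M" for s'
  proof -
    obtain i v where "s' = add_vertex n s i v"
      using set_pmf_cwrt_step[OF assms(1,2) s'] by blast
    then show ?thesis
      using p_nonneg[OF assms(3)] p_le_1[OF assms(3)]
      by (simp add: type_dev_def type_count_add_vertex algebra_simps)
  qed
  show ?thesis
    using expectation_square_le[where X = "type_dev l (Suc n)" and d = 1,
        OF finite_set_pmf_cwrt_step[OF assms(1,2)] close] mean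
    by simp
qed

lemma deg_dev_drift:
  assumes "valid_state n s" "1 \<le> n" "j \<in> {1..K}"
  shows "measure_pmf.expectation (cwrt_step K p w (Suc n) s) (deg_dev k j (Suc n)) - deg_dev k j n s
       = r j / real n * (pre_deg_dev k j n s - deg_dev k j n s)
         + (real (pre_deg_count k j n s) - real (deg_count k j n s)) * (attach_rate j n s - r j / real n)"
proof -
  have n: "real n \<noteq> 0" using assms(2) by simp
  have "measure_pmf.expectation (cwrt_step K p w (Suc n) s) (deg_dev k j (Suc n)) - deg_dev k j n s
      = of_bool (k = 0) * p j - c_type k j
        + attach_rate j n s * (real (pre_deg_count k j n s) - real (deg_count k j n s))"
    using expectation_deg_count_step[OF assms] integrable_cwrt_step[OF assms(1,2)]
    by (simp add: deg_dev_def[abs_def] Bochner_Integration.integral_diff algebra_simps)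
  also have "of_bool (k = 0) * p j - c_type k j = r j * (c_type k j - c_type_pred k j)"
    using c_type_balance[OF assms(3), of k] by (simp add: algebra_simps)
  also have "r j * (c_type k j - c_type_pred k j)
        + attach_rate j n s * (real (pre_deg_count k j n s) - real (deg_count k j n s))
      = r j / real n * (pre_deg_dev k j n s - deg_dev k j n s)
        + (real (pre_deg_count k j n s) - real (deg_count k j n s)) * (attach_rate j n s - r j / real n)"
    using n by (simp add: pre_deg_dev_def deg_dev_def field_simps)
  finally show ?thesis .
qed

lemma attach_rate_error_le:
  assumes "valid_state n s" "1 \<le> n" "j \<in> {1..K}" "\<bar>\<Delta>\<bar> \<le> real n"
  shows "2 * a * (\<Delta> * (attach_rate j n s - r j / real n))
       \<le> (a\<^sup>2 + real K * (w_max / w_min) ^ 4 * (\<Sum>l\<in>{1..K}. (type_dev l n s)\<^sup>2)) / real n"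
proof -
  define A where "A = (w_max / w_min)\<^sup>2"
  define M where "M = (\<Sum>l\<in>{1..K}. \<bar>type_dev l n s\<bar>)"
  have n: "0 < real n" and K: "0 < real K" using assms(2) K_pos by simp_all
  have "\<bar>attach_rate j n s - r j / real n\<bar> \<le> A * M / (real n)\<^sup>2"
    unfolding A_def M_def by (rule attach_rate_dev[OF assms(1-3)])
  with assms(4) have "\<bar>\<Delta>\<bar> * \<bar>attach_rate j n s - r j / real n\<bar> \<le> real n * (A * M / (real n)\<^sup>2)"
    by (intro mult_mono) auto
  also have "\<dots> = A * M / real n"
    using n by (simp add: power2_eq_square)
  finally have "2 * \<bar>a\<bar> * (\<bar>\<Delta>\<bar> * \<bar>attach_rate j n s - r j / real n\<bar>) \<le> 2 * \<bar>a\<bar> * (A * M / real n)"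
    by (intro mult_left_mono) auto
  moreover have "2 * a * (\<Delta> * (attach_rate j n s - r j / real n))
      \<le> 2 * \<bar>a\<bar> * (\<bar>\<Delta>\<bar> * \<bar>attach_rate j n s - r j / real n\<bar>)"
    using abs_ge_self[of "a * (\<Delta> * (attach_rate j n s - r j / real n))"] by (simp add: abs_mult)
  moreover have "2 * \<bar>a\<bar> * (A * M) \<le> a\<^sup>2 + real K * A\<^sup>2 * (\<Sum>l\<in>{1..K}. (type_dev l n s)\<^sup>2)"
  proof -
    have "2 * \<bar>a\<bar> * (A * M) = (\<Sum>l\<in>{1..K}. 2 * \<bar>a\<bar> * (A * \<bar>type_dev l n s\<bar>))"
      unfolding M_def by (simp add: sum_distrib_left mult_ac)
    also have "\<dots> \<le> (\<Sum>l\<in>{1..K}. \<bar>a\<bar>\<^sup>2 / real K + real K * (A * \<bar>type_dev l n s\<bar>)\<^sup>2)"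
      by (intro sum_mono two_mult_le_weighted_squares K)
    also have "\<dots> = a\<^sup>2 + real K * A\<^sup>2 * (\<Sum>l\<in>{1..K}. (type_dev l n s)\<^sup>2)"
      using K by (simp add: sum.distrib sum_distrib_left power_mult_distrib mult_ac)
    finally show ?thesis .
  qed
  then have "2 * \<bar>a\<bar> * (A * M) / real n \<le> (a\<^sup>2 + real K * A\<^sup>2 * (\<Sum>l\<in>{1..K}. (type_dev l n s)\<^sup>2)) / real n"
    using n by (intro divide_right_mono) auto
  moreover have "A\<^sup>2 = (w_max / w_min) ^ 4"
    unfolding A_def by (simp flip: power_mult)
  ultimately show ?thesis
    by simp
qed

lemma deg_dev_increment_le:
  assumes "valid_state n s" "1 \<le> n" "j \<in> {1..K}" "s' \<in> set_pmf (cwrt_step K p w (Suc n) s)"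
  shows "\<bar>deg_dev k j (Suc n) s' - deg_dev k j n s\<bar> \<le> 2"
proof -
  obtain i v where v: "v \<in> {1..n}" and s': "s' = add_vertex n s i v"
    using set_pmf_cwrt_step[OF assms(1,2,4)] by blast
  have "deg_dev k j (Suc n) s' - deg_dev k j n s = of_bool (fst s v = j \<and> Suc (out_degree n s v) = k)
      - of_bool (fst s v = j \<and> out_degree n s v = k) + of_bool (i = j \<and> k = 0) - c_type k j"
    unfolding s' deg_dev_def deg_count_add_vertex[OF assms(1) v] by (simp add: algebra_simps)
  then show ?thesis
    using c_type_bounds[OF assms(3), of k] by (auto simp: of_bool_def)
qed

lemma deg_dev_step:
  assumes "valid_state n s" "1 \<le> n" "j \<in> {1..K}"
  shows "measure_pmf.expectation (cwrt_step K p w (Suc n) s) (\<lambda>s'. (deg_dev k j (Suc n) s')\<^sup>2)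
       \<le> (1 + 1 / real n) * (deg_dev k j n s)\<^sup>2 + r j / real n * (pre_deg_dev k j n s)\<^sup>2
         + real K * (w_max / w_min) ^ 4 / real n * (\<Sum>l\<in>{1..K}. (type_dev l n s)\<^sup>2) + 4"
proof -
  let ?M = "cwrt_step K p w (Suc n) s"
  define a where "a = deg_dev k j n s"
  define b where "b = pre_deg_dev k j n s"
  define \<Delta> where "\<Delta> = real (pre_deg_count k j n s) - real (deg_count k j n s)"
  define Z2 where "Z2 = real K * (w_max / w_min) ^ 4 * (\<Sum>l\<in>{1..K}. (type_dev l n s)\<^sup>2)"
  have n: "0 < real n" using assms(2) by simp
  have close: "\<bar>deg_dev k j (Suc n) s' - a\<bar> \<le> 2" if "s' \<in> set_pmf ?M" for s'
    unfolding a_def using deg_dev_increment_le[OF assms that] .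
  \<comment> \<open>The drift pulls a towards 0; the price (r_j / n) b^2 is paid by the moment for k - 1.\<close>
  have contraction: "2 * a * (r j / real n * (b - a)) \<le> r j / real n * b\<^sup>2"
  proof -
    have "2 * a * (b - a) = b\<^sup>2 - (a - b)\<^sup>2 - a\<^sup>2"
      by (simp add: power2_eq_square algebra_simps)
    then have "r j / real n * (2 * a * (b - a)) \<le> r j / real n * b\<^sup>2"
      using r_tilde_nonneg[OF assms(3)] n by (intro mult_left_mono) auto
    then show ?thesis by (simp only: mult_ac)
  qed
  have "\<bar>\<Delta>\<bar> \<le> real n"
    unfolding \<Delta>_def using deg_count_le[of k j n s] pre_deg_count_le[of k j n s] by linarith
  note error = attach_rate_error_le[OF assms this, of a, folded Z2_def]
  have "measure_pmf.expectation ?M (\<lambda>s'. (deg_dev k j (Suc n) s')\<^sup>2)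
      \<le> a\<^sup>2 + 2 * a * (measure_pmf.expectation ?M (deg_dev k j (Suc n)) - a) + 2\<^sup>2"
    by (rule expectation_square_le[OF finite_set_pmf_cwrt_step[OF assms(1,2)] close])
  also have "\<dots> = a\<^sup>2 + 2 * a * (r j / real n * (b - a))
      + 2 * a * (\<Delta> * (attach_rate j n s - r j / real n)) + 4"
    unfolding deg_dev_drift[OF assms] a_def b_def \<Delta>_def by (simp add: algebra_simps)
  also have "\<dots> \<le> a\<^sup>2 + r j / real n * b\<^sup>2 + (a\<^sup>2 + Z2) / real n + 4"
    using contraction error by simp
  also have "\<dots> = (1 + 1 / real n) * a\<^sup>2 + r j / real n * b\<^sup>2 + Z2 / real n + 4"
    by (simp add: algebra_simps add_divide_distrib)
  finally show ?thesis
    unfolding a_def b_def Z2_def by (simp add: mult.assoc)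
qed

lemma expectation_cwrt_Suc:
  fixes f :: "cwrt_state \<Rightarrow> real"
  assumes "K \<le> n"
  shows "measure_pmf.expectation (cwrt K p w (Suc n)) f
       = measure_pmf.expectation (cwrt K p w n) (\<lambda>s. measure_pmf.expectation (cwrt_step K p w (Suc n) s) f)"
proof -
  have "1 \<le> n" using assms K_pos by simp
  have law: "cwrt K p w (Suc n) = cwrt K p w n \<bind> cwrt_step K p w (Suc n)"
    using assms by simp
  show ?thesis
    unfolding law using assms \<open>1 \<le> n\<close>
    by (intro expectation_bind_pmf_finite finite_set_pmf_cwrt finite_set_pmf_cwrt_step valid_state_cwrt)
qed

lemma expectation_cwrt_mono:
  fixes f g :: "cwrt_state \<Rightarrow> real"
  assumes "K \<le> n" and "\<And>s. valid_state n s \<Longrightarrow> f s \<le> g s"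
  shows "measure_pmf.expectation (cwrt K p w n) f \<le> measure_pmf.expectation (cwrt K p w n) g"
  using assms by (intro integral_mono_AE integrable_cwrt AE_pmfI) (auto intro: valid_state_cwrt)

definition deg_moment :: "nat \<Rightarrow> nat \<Rightarrow> nat \<Rightarrow> real" where
  "deg_moment k j n = measure_pmf.expectation (cwrt K p w n) (\<lambda>s. (deg_dev k j n s)\<^sup>2)"

definition type_moment :: "nat \<Rightarrow> nat \<Rightarrow> real" where
  "type_moment l n = measure_pmf.expectation (cwrt K p w n) (\<lambda>s. (type_dev l n s)\<^sup>2)"

lemma type_moment_step:
  assumes "K \<le> n" "l \<in> {1..K}"
  shows "type_moment l (Suc n) \<le> type_moment l n + 1"
proof -
  have "1 \<le> n" using assms K_pos by simp
  have "type_moment l (Suc n) = measure_pmf.expectation (cwrt K p w n)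
      (\<lambda>s. measure_pmf.expectation (cwrt_step K p w (Suc n) s) (\<lambda>s'. (type_dev l (Suc n) s')\<^sup>2))"
    unfolding type_moment_def by (rule expectation_cwrt_Suc[OF assms(1)])
  also have "\<dots> \<le> measure_pmf.expectation (cwrt K p w n) (\<lambda>s. (type_dev l n s)\<^sup>2 + 1)"
    using type_dev_step \<open>1 \<le> n\<close> assms by (intro expectation_cwrt_mono) auto
  also have "\<dots> = type_moment l n + 1"
    using integrable_cwrt[OF assms(1)] by (simp add: type_moment_def)
  finally show ?thesis .
qed

lemma deg_moment_step:
  assumes "K \<le> n" "j \<in> {1..K}"
  shows "deg_moment k j (Suc n)
       \<le> (1 + 1 / real n) * deg_moment k j n
         + r j / real n * measure_pmf.expectation (cwrt K p w n) (\<lambda>s. (pre_deg_dev k j n s)\<^sup>2)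
         + real K * (w_max / w_min) ^ 4 / real n * (\<Sum>l\<in>{1..K}. type_moment l n) + 4"
proof -
  have "1 \<le> n" using assms K_pos by simp
  have "deg_moment k j (Suc n) = measure_pmf.expectation (cwrt K p w n)
      (\<lambda>s. measure_pmf.expectation (cwrt_step K p w (Suc n) s) (\<lambda>s'. (deg_dev k j (Suc n) s')\<^sup>2))"
    unfolding deg_moment_def by (rule expectation_cwrt_Suc[OF assms(1)])
  also have "\<dots> \<le> measure_pmf.expectation (cwrt K p w n)
      (\<lambda>s. (1 + 1 / real n) * (deg_dev k j n s)\<^sup>2 + r j / real n * (pre_deg_dev k j n s)\<^sup>2
         + real K * (w_max / w_min) ^ 4 / real n * (\<Sum>l\<in>{1..K}. (type_dev l n s)\<^sup>2) + 4)"
    using deg_dev_step \<open>1 \<le> n\<close> assms by (intro expectation_cwrt_mono) auto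
  also have "\<dots> = (1 + 1 / real n) * deg_moment k j n
         + r j / real n * measure_pmf.expectation (cwrt K p w n) (\<lambda>s. (pre_deg_dev k j n s)\<^sup>2)
         + real K * (w_max / w_min) ^ 4 / real n * (\<Sum>l\<in>{1..K}. type_moment l n) + 4"
    using integrable_cwrt[OF assms(1)] by (simp add: deg_moment_def type_moment_def)
  finally show ?thesis .
qed

lemma type_moment_subquadratic:
  assumes "l \<in> {1..K}"
  shows "(\<lambda>n. type_moment l n / (real n)\<^sup>2) \<longlonglongrightarrow> 0"
proof (rule subquadratic_of_recurrence[where e = "\<lambda>_. 1"])
  show "\<forall>\<^sub>F n in sequentially. type_moment l (Suc n) \<le> (1 + 1 / real n) * type_moment l n + 1"
  proof (rule eventually_sequentiallyI[of K])
    fix n assume "K \<le> n"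
    have "0 \<le> type_moment l n / real n"
      by (simp add: type_moment_def)
    then show "type_moment l (Suc n) \<le> (1 + 1 / real n) * type_moment l n + 1"
      using type_moment_step[OF \<open>K \<le> n\<close> assms] by (simp add: algebra_simps)
  qed
  show "0 \<le> type_moment l n" for n
    by (simp add: type_moment_def)
qed (simp add: lim_inverse_n')

lemma deg_moment_subquadratic_of_pre:
  assumes "j \<in> {1..K}"
    and pre: "(\<lambda>n. measure_pmf.expectation (cwrt K p w n) (\<lambda>s. (pre_deg_dev k j n s)\<^sup>2) / (real n)\<^sup>2)
              \<longlonglongrightarrow> 0"
  shows "(\<lambda>n. deg_moment k j n / (real n)\<^sup>2) \<longlonglongrightarrow> 0"
proof -
  define P where "P n = measure_pmf.expectation (cwrt K p w n) (\<lambda>s. (pre_deg_dev k j n s)\<^sup>2)" for n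
  define C where "C = real K * (w_max / w_min) ^ 4"
  define e where "e n = r j / real n * P n + C / real n * (\<Sum>l\<in>{1..K}. type_moment l n) + 4" for n
  show ?thesis
  proof (rule subquadratic_of_recurrence[where e = e])
    show "\<forall>\<^sub>F n in sequentially. deg_moment k j (Suc n) \<le> (1 + 1 / real n) * deg_moment k j n + e n"
      using deg_moment_step[OF _ assms(1)]
      by (intro eventually_sequentiallyI[of K]) (simp add: e_def P_def C_def add.assoc)
    show "0 \<le> deg_moment k j n" for n
      by (simp add: deg_moment_def)
    have "(\<lambda>n. r j * (P n / (real n)\<^sup>2) + C * (\<Sum>l\<in>{1..K}. type_moment l n / (real n)\<^sup>2) + 4 / real n)
        \<longlonglongrightarrow> r j * 0 + C * (\<Sum>l\<in>{1..K}. 0) + 0"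
      using pre type_moment_subquadratic unfolding P_def by (intro tendsto_intros) auto
    moreover have "e n / real n
        = r j * (P n / (real n)\<^sup>2) + C * (\<Sum>l\<in>{1..K}. type_moment l n / (real n)\<^sup>2) + 4 / real n" for n
      by (simp add: e_def add_divide_distrib sum_divide_distrib[symmetric] power2_eq_square)
    ultimately show "(\<lambda>n. e n / real n) \<longlonglongrightarrow> 0"
      by simp
  qed
qed

lemma deg_moment_subquadratic:
  "j \<in> {1..K} \<Longrightarrow> (\<lambda>n. deg_moment k j n / (real n)\<^sup>2) \<longlonglongrightarrow> 0"
proof (induction k arbitrary: j)
  case 0
  then show ?case
    by (intro deg_moment_subquadratic_of_pre) (simp_all add: pre_deg_dev_0)
next
  case (Suc k)
  then show ?case
    by (intro deg_moment_subquadratic_of_pre) (simp_all add: pre_deg_dev_Suc deg_moment_def[symmetric])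
qed

section \<open>Concentration of the degree counts\<close>

lemma num_deg_eq_sum:
  assumes "valid_state n s"
  shows "real (num_deg k n s) = (\<Sum>j\<in>{1..K}. real (deg_count k j n s))"
proof -
  have "real (num_deg k n s) = (\<Sum>v\<in>{1..n}. of_bool (out_degree n s v = k))"
    unfolding num_deg_def real_card_filter[OF finite_atLeastAtMost] ..
  also have "\<dots> = (\<Sum>j\<in>{1..K}. \<Sum>v\<in>{v\<in>{1..n}. fst s v = j}. of_bool (out_degree n s v = k))"
    using assms by (intro sum.group[symmetric]) (auto simp: valid_state_def)
  also have "\<dots> = (\<Sum>j\<in>{1..K}. real (deg_count k j n s))"
  proof (rule sum.cong[OF refl])
    fix j
    have "{u\<in>{1..n}. fst s u = j \<and> out_degree n s u = k} = {v\<in>{v\<in>{1..n}. fst s v = j}. out_degree n s v = k}"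
      by auto
    then show "(\<Sum>v\<in>{v\<in>{1..n}. fst s v = j}. of_bool (out_degree n s v = k)) = real (deg_count k j n s)"
      unfolding deg_count_def by (simp only:) (rule real_card_filter[symmetric], simp)
  qed
  finally show ?thesis .
qed

lemma num_deg_deviation_sq_le:
  assumes "valid_state n s" "1 \<le> n"
  shows "(real (num_deg k n s) / real n - c_tilde K p w k)\<^sup>2
       \<le> real K * (\<Sum>j\<in>{1..K}. (deg_dev k j n s)\<^sup>2) / (real n)\<^sup>2"
proof -
  have "real (num_deg k n s) / real n - c_tilde K p w k = (\<Sum>j\<in>{1..K}. deg_dev k j n s) / real n"
    using assms(2) by (simp add: num_deg_eq_sum[OF assms(1)] c_tilde_eq_sum deg_dev_def sum_subtractf
        diff_divide_distrib flip: sum_distrib_right)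
  then show ?thesis
    using sum_squared_le_sum_of_squares[of "\<lambda>j. deg_dev k j n s" "{1..K}"]
    by (simp add: power_divide divide_right_mono mult.commute)
qed

lemma deviation_prob_le:
  assumes "K \<le> n" "0 < \<epsilon>"
  shows "measure_pmf.prob (cwrt K p w n) {s. \<bar>real (num_deg k n s) / real n - c_tilde K p w k\<bar> > \<epsilon>}
       \<le> real K / \<epsilon>\<^sup>2 * (\<Sum>j\<in>{1..K}. deg_moment k j n / (real n)\<^sup>2)"
proof -
  let ?M = "measure_pmf (cwrt K p w n)"
  let ?A = "{s. \<bar>real (num_deg k n s) / real n - c_tilde K p w k\<bar> > \<epsilon>}"
  define G where "G s = real K * (\<Sum>j\<in>{1..K}. (deg_dev k j n s)\<^sup>2) / (real n)\<^sup>2" for s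
  have large: "\<epsilon>\<^sup>2 \<le> G s" if "s \<in> ?A \<inter> set_pmf (cwrt K p w n)" for s
  proof -
    from that have "\<epsilon>\<^sup>2 \<le> (real (num_deg k n s) / real n - c_tilde K p w k)\<^sup>2"
      using assms(2) by (simp add: abs_le_square_iff[symmetric])
    moreover have "valid_state n s" "1 \<le> n"
      using valid_state_cwrt[OF assms(1)] that assms(1) K_pos by auto
    ultimately show ?thesis
      unfolding G_def using num_deg_deviation_sq_le by (blast intro: order.trans)
  qed
  have "measure_pmf.prob (cwrt K p w n) ?A = measure ?M (?A \<inter> set_pmf (cwrt K p w n))"
    by (simp add: measure_Int_set_pmf)
  also have "\<dots> \<le> measure ?M {s \<in> space ?M. \<epsilon>\<^sup>2 \<le> G s}"
    using large by (intro measure_pmf.finite_measure_mono) auto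
  also have "\<dots> \<le> measure_pmf.expectation (cwrt K p w n) G / \<epsilon>\<^sup>2"
    using assms by (intro integral_Markov_inequality_measure[where A = UNIV] integrable_cwrt AE_pmfI)
      (auto simp: G_def sum_nonneg)
  also have "measure_pmf.expectation (cwrt K p w n) G
      = real K * (\<Sum>j\<in>{1..K}. deg_moment k j n) / (real n)\<^sup>2"
    using integrable_cwrt[OF assms(1)] by (simp add: G_def[abs_def] deg_moment_def)
  finally show ?thesis
    by (simp add: sum_divide_distrib[symmetric] mult.commute)
qed

lemma num_deg_concentration:
  assumes "0 < \<epsilon>"
  shows "(\<lambda>n. measure_pmf.prob (cwrt K p w n)
            {s. \<bar>real (num_deg k n s) / real n - c_tilde K p w k\<bar> > \<epsilon>}) \<longlonglongrightarrow> 0"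
proof (rule tendsto_sandwich[OF _ _ tendsto_const])
  show "\<forall>\<^sub>F n in sequentially. measure_pmf.prob (cwrt K p w n)
            {s. \<bar>real (num_deg k n s) / real n - c_tilde K p w k\<bar> > \<epsilon>}
          \<le> real K / \<epsilon>\<^sup>2 * (\<Sum>j\<in>{1..K}. deg_moment k j n / (real n)\<^sup>2)"
    using deviation_prob_le[OF _ assms] by (intro eventually_sequentiallyI[of K])
  have "(\<lambda>n. real K / \<epsilon>\<^sup>2 * (\<Sum>j\<in>{1..K}. deg_moment k j n / (real n)\<^sup>2))
      \<longlonglongrightarrow> real K / \<epsilon>\<^sup>2 * (\<Sum>j\<in>{1..K}. 0)"
    using deg_moment_subquadratic by (intro tendsto_intros) auto
  then show "(\<lambda>n. real K / \<epsilon>\<^sup>2 * (\<Sum>j\<in>{1..K}. deg_moment k j n / (real n)\<^sup>2)) \<longlonglongrightarrow> 0"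
    by simp
qed simp

end

theorem theorem3p8:
  fixes K :: nat and p :: "nat \<Rightarrow> real" and w :: "nat \<Rightarrow> nat \<Rightarrow> real" and k :: nat
  assumes "K \<ge> 2"
    and "\<forall>i\<in>{1..K}. p i \<ge> 0"
    and "(\<Sum>i\<in>{1..K}. p i) = 1"
    and "\<forall>i\<in>{1..K}. p i \<le> p 1"
    and "p 1 > 0"
    and "\<forall>i\<in>{1..K}. \<forall>j\<in>{1..K}. w i j > 0"
  shows "\<forall>\<epsilon>>0. (\<lambda>n. measure_pmf.prob (cwrt K p w n)
            {s. \<bar>real (num_deg k n s) / real n - c_tilde K p w k\<bar> > \<epsilon>})
          \<longlonglongrightarrow> 0"
proof -
  interpret cwrt_model K p w
    using assms(1,2,3,6) by unfold_locales auto
  show ?thesis using num_deg_concentration by blast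
qed

end
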